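(* Let $M$ be a model with borders and let $f:M^s\to U(n)$ be the unique p-morphism (with image $M_{\wedge,\to}$). For any $w\in M^s$ and any $(\wedge,\to)$-formula $\varphi$, \[ M,w\models\varphi \iff M_{\wedge,\to},f(w)\models\varphi. \]
   Context: Fix $n\ge1$ and variables $p_1,\dots,p_n$; $2^n=\{0,1\}^n$ with componentwise order. A model is $(M,\le,c)$, $(M,\le)$ a poset, $c:M\to 2^n$ order-preserving, with intuitionistic Kripke semantics. A p-morphism of models is an order- and colour-preserving map $f$ such that $f(x)\le y$ implies $f(x')=y$ for some $x'\ge x$. A $(\wedge,\to)$-formula uses only $\wedge$ and $\to$. A point $x$ is a $q$-border point if $x\not\models q$ and all $y>x$ satisfy $q$; $x$ is separated if it is a $q$-border point for some variable $q$. $M^s$: separated points with restricted order and colouring (a model in its own right; all its chains have at most $n$ elements). $M$ has borders if for every variable $p$ and every $x$ with $x\not\models p$ there is a $p$-border point $y\ge x$. $U(n)$ is the $n$-universal model: the generated submodel of the canonical model of IPC on $p_1,\dots,p_n$ (prime filters of the free Heyting algebra ordered by inclusion, $c(x)_i=1$ iff $p_i\in x$) consisting of points with finite up-set. For every model of finite depth there is a unique p-morphism into $U(n)$. $M_{\wedge,\to}$ is the image of the unique p-morphism $M^s\to U(n)$, a generated submodel of $U(n)$. *)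

theory Defs
  imports Main
begin

text \<open>Variables p_1,...,p_n are represented by the indices 0,...,n-1.\<close>

datatype form = Var nat | Bot | And form form | Or form form | Imp form form

fun vars :: "form \<Rightarrow> nat set" where
  "vars (Var i) = {i}"
| "vars Bot = {}"
| "vars (And a b) = vars a \<union> vars b"
| "vars (Or a b) = vars a \<union> vars b"
| "vars (Imp a b) = vars a \<union> vars b"

fun and_imp_form :: "form \<Rightarrow> bool" where
  "and_imp_form (Var i) = True"
| "and_imp_form Bot = False"
| "and_imp_form (And a b) = (and_imp_form a \<and> and_imp_form b)"
| "and_imp_form (Or a b) = False"
| "and_imp_form (Imp a b) = (and_imp_form a \<and> and_imp_form b)"

text \<open>A model is given by a carrier W, an order R and a colouring V (V x i = i-th bit of c(x)).\<close>

definition is_model :: "nat \<Rightarrow> 'a set \<Rightarrow> ('a \<Rightarrow> 'a \<Rightarrow> bool) \<Rightarrow> ('a \<Rightarrow> nat \<Rightarrow> bool) \<Rightarrow> bool" where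
  "is_model n W R V \<longleftrightarrow>
     (\<forall>x\<in>W. R x x) \<and>
     (\<forall>x\<in>W. \<forall>y\<in>W. \<forall>z\<in>W. R x y \<longrightarrow> R y z \<longrightarrow> R x z) \<and>
     (\<forall>x\<in>W. \<forall>y\<in>W. R x y \<longrightarrow> R y x \<longrightarrow> x = y) \<and>
     (\<forall>x\<in>W. \<forall>y\<in>W. \<forall>i<n. R x y \<longrightarrow> V x i \<longrightarrow> V y i)"

fun sat :: "'a set \<Rightarrow> ('a \<Rightarrow> 'a \<Rightarrow> bool) \<Rightarrow> ('a \<Rightarrow> nat \<Rightarrow> bool) \<Rightarrow> 'a \<Rightarrow> form \<Rightarrow> bool" where
  "sat W R V w (Var i) = V w i"
| "sat W R V w Bot = False"
| "sat W R V w (And a b) = (sat W R V w a \<and> sat W R V w b)"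
| "sat W R V w (Or a b) = (sat W R V w a \<or> sat W R V w b)"
| "sat W R V w (Imp a b) = (\<forall>v\<in>W. R w v \<longrightarrow> sat W R V v a \<longrightarrow> sat W R V v b)"

definition border_point :: "'a set \<Rightarrow> ('a \<Rightarrow> 'a \<Rightarrow> bool) \<Rightarrow> ('a \<Rightarrow> nat \<Rightarrow> bool) \<Rightarrow> nat \<Rightarrow> 'a \<Rightarrow> bool" where
  "border_point W R V i x \<longleftrightarrow>
     x \<in> W \<and> \<not> sat W R V x (Var i) \<and> (\<forall>y\<in>W. R x y \<and> y \<noteq> x \<longrightarrow> sat W R V y (Var i))"

definition separated :: "nat \<Rightarrow> 'a set \<Rightarrow> ('a \<Rightarrow> 'a \<Rightarrow> bool) \<Rightarrow> ('a \<Rightarrow> nat \<Rightarrow> bool) \<Rightarrow> 'a \<Rightarrow> bool" where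
  "separated n W R V x \<longleftrightarrow> (\<exists>i<n. border_point W R V i x)"

text \<open>Carrier of M^s (order and colouring are the restrictions of R and V).\<close>
definition sep_points :: "nat \<Rightarrow> 'a set \<Rightarrow> ('a \<Rightarrow> 'a \<Rightarrow> bool) \<Rightarrow> ('a \<Rightarrow> nat \<Rightarrow> bool) \<Rightarrow> 'a set" where
  "sep_points n W R V = {x \<in> W. separated n W R V x}"

definition has_borders :: "nat \<Rightarrow> 'a set \<Rightarrow> ('a \<Rightarrow> 'a \<Rightarrow> bool) \<Rightarrow> ('a \<Rightarrow> nat \<Rightarrow> bool) \<Rightarrow> bool" where
  "has_borders n W R V \<longleftrightarrow>
     (\<forall>i<n. \<forall>x\<in>W. \<not> sat W R V x (Var i) \<longrightarrow> (\<exists>y\<in>W. R x y \<and> border_point W R V i y))"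

definition p_morphism ::
  "nat \<Rightarrow> 'a set \<Rightarrow> ('a \<Rightarrow> 'a \<Rightarrow> bool) \<Rightarrow> ('a \<Rightarrow> nat \<Rightarrow> bool) \<Rightarrow>
   'b set \<Rightarrow> ('b \<Rightarrow> 'b \<Rightarrow> bool) \<Rightarrow> ('b \<Rightarrow> nat \<Rightarrow> bool) \<Rightarrow> ('a \<Rightarrow> 'b) \<Rightarrow> bool" where
  "p_morphism n W R V W' R' V' f \<longleftrightarrow>
     f ` W \<subseteq> W' \<and>
     (\<forall>x\<in>W. \<forall>y\<in>W. R x y \<longrightarrow> R' (f x) (f y)) \<and>
     (\<forall>x\<in>W. \<forall>i<n. V' (f x) i = V x i) \<and>
     (\<forall>x\<in>W. \<forall>y\<in>W'. R' (f x) y \<longrightarrow> (\<exists>x'\<in>W. R x x' \<and> f x' = y))"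

inductive ipc :: "form \<Rightarrow> bool" where
  ax1: "ipc (Imp a (Imp b a))"
| ax2: "ipc (Imp (Imp a (Imp b c)) (Imp (Imp a b) (Imp a c)))"
| ax3: "ipc (Imp (And a b) a)"
| ax4: "ipc (Imp (And a b) b)"
| ax5: "ipc (Imp a (Imp b (And a b)))"
| ax6: "ipc (Imp a (Or a b))"
| ax7: "ipc (Imp b (Or a b))"
| ax8: "ipc (Imp (Imp a c) (Imp (Imp b c) (Imp (Or a b) c)))"
| ax9: "ipc (Imp Bot a)"
| mp: "ipc (Imp a b) \<Longrightarrow> ipc a \<Longrightarrow> ipc b"

text \<open>Prime filters of the free Heyting algebra on p_1..p_n (the Lindenbaum algebra of
  formulas in variables < n), represented as the sets of formulas whose classes lie in the filter.\<close>
definition prime_filter :: "nat \<Rightarrow> form set \<Rightarrow> bool" where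
  "prime_filter n G \<longleftrightarrow>
     G \<subseteq> {a. vars a \<subseteq> {..<n}} \<and>
     (\<forall>a. vars a \<subseteq> {..<n} \<and> ipc a \<longrightarrow> a \<in> G) \<and>
     (\<forall>a\<in>G. \<forall>b. vars b \<subseteq> {..<n} \<and> ipc (Imp a b) \<longrightarrow> b \<in> G) \<and>
     (\<forall>a\<in>G. \<forall>b\<in>G. And a b \<in> G) \<and>
     Bot \<notin> G \<and>
     (\<forall>a b. Or a b \<in> G \<longrightarrow> a \<in> G \<or> b \<in> G)"

definition U_W :: "nat \<Rightarrow> form set set" where
  "U_W n = {G. prime_filter n G \<and> finite {H. prime_filter n H \<and> G \<subseteq> H}}"

definition U_R :: "form set \<Rightarrow> form set \<Rightarrow> bool" where
  "U_R G H \<longleftrightarrow> G \<subseteq> H"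

definition U_V :: "form set \<Rightarrow> nat \<Rightarrow> bool" where
  "U_V G i \<longleftrightarrow> Var i \<in> G"

end

theory Submission
  imports Defs
begin

text \<open>A \<open>(\<and>,\<rightarrow>)\<close>-formula that fails at a point already fails at a separated point above it:
  for a variable this is the border property, for a conjunction it is inherited from a failing
  conjunct, and for \<open>\<psi> \<rightarrow> \<chi>\<close> one moves to a point forcing \<open>\<psi>\<close> but not \<open>\<chi>\<close>, then up to a separated
  point refuting \<open>\<chi>\<close>, where \<open>\<psi>\<close> persists. Consequently the truth of such formulas at separated
  points does not change when the model is cut down to \<open>M\<^sup>s\<close>, and, as for any p-morphism,
  truth on \<open>M\<^sup>s\<close> is transported to the image of \<open>f\<close>.\<close>

lemma is_model_refl: "is_model n W R V \<Longrightarrow> x \<in> W \<Longrightarrow> R x x"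
  unfolding is_model_def by blast

lemma is_model_trans:
  "is_model n W R V \<Longrightarrow> x \<in> W \<Longrightarrow> y \<in> W \<Longrightarrow> z \<in> W \<Longrightarrow> R x y \<Longrightarrow> R y z \<Longrightarrow> R x z"
  unfolding is_model_def by blast

lemma is_model_mono:
  "is_model n W R V \<Longrightarrow> x \<in> W \<Longrightarrow> y \<in> W \<Longrightarrow> i < n \<Longrightarrow> R x y \<Longrightarrow> V x i \<Longrightarrow> V y i"
  unfolding is_model_def by blast

lemma sat_persistent:
  assumes "is_model n W R V" and "vars \<phi> \<subseteq> {..<n}"
    and "x \<in> W" and "y \<in> W" and "R x y" and "sat W R V x \<phi>"
  shows "sat W R V y \<phi>"
  using assms(2-)
proof (induction \<phi> arbitrary: x y)
  case (Var i)
  then show ?case using is_model_mono[OF assms(1)] by simp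
next
  case (Imp a b)
  then show ?case using is_model_trans[OF assms(1), of x y] by auto
qed auto

lemma sep_pointsD: "x \<in> sep_points n W R V \<Longrightarrow> x \<in> W"
  unfolding sep_points_def by simp

lemma has_borders_refuted_at_sep_point:
  assumes m: "is_model n W R V" and hb: "has_borders n W R V"
    and "and_imp_form \<phi>" and "vars \<phi> \<subseteq> {..<n}" and "v \<in> W" and "\<not> sat W R V v \<phi>"
  shows "\<exists>u\<in>sep_points n W R V. R v u \<and> \<not> sat W R V u \<phi>"
  using assms(3-)
proof (induction \<phi> arbitrary: v)
  case (Var i)
  then have "i < n" by simp
  then obtain y where "y \<in> W" "R v y" "border_point W R V i y"
    using hb Var.prems(3,4) unfolding has_borders_def by blast
  moreover from this have "y \<in> sep_points n W R V"
    using \<open>i < n\<close> unfolding sep_points_def separated_def by blast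
  ultimately show ?case unfolding border_point_def by blast
next
  case (And a b)
  consider "\<not> sat W R V v a" | "\<not> sat W R V v b" using And.prems(4) by auto
  then show ?case
  proof cases
    case 1
    then obtain u where "u \<in> sep_points n W R V" "R v u" "\<not> sat W R V u a"
      using And.IH(1)[of v] And.prems by auto
    then show ?thesis by auto
  next
    case 2
    then obtain u where "u \<in> sep_points n W R V" "R v u" "\<not> sat W R V u b"
      using And.IH(2)[of v] And.prems by auto
    then show ?thesis by auto
  qed
next
  case (Imp a b)
  obtain v' where v': "v' \<in> W" "R v v'" "sat W R V v' a" "\<not> sat W R V v' b"
    using Imp.prems(4) by auto
  obtain u where u: "u \<in> sep_points n W R V" "R v' u" "\<not> sat W R V u b"
    using Imp.IH(2)[of v'] Imp.prems(1,2) v'(1,4) by auto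
  have uW: "u \<in> W" using u(1) by (rule sep_pointsD)
  have "sat W R V u a" using sat_persistent[OF m _ v'(1) uW u(2) v'(3)] Imp.prems by simp
  then have "\<not> sat W R V u (Imp a b)" using uW u(3) is_model_refl[OF m uW] by auto
  then show ?case using u(1) uW is_model_trans[OF m Imp.prems(3) v'(1) uW v'(2) u(2)] by blast
qed auto

lemma sat_sep_points_iff:
  assumes m: "is_model n W R V" and hb: "has_borders n W R V"
    and "and_imp_form \<phi>" and "vars \<phi> \<subseteq> {..<n}" and "w \<in> sep_points n W R V"
  shows "sat W R V w \<phi> \<longleftrightarrow> sat (sep_points n W R V) R V w \<phi>"
  using assms(3-)
proof (induction \<phi> arbitrary: w)
  case (Imp a b)
  let ?S = "sep_points n W R V"
  have IH_a: "sat W R V u a \<longleftrightarrow> sat ?S R V u a" if "u \<in> ?S" for u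
    using Imp.IH(1) Imp.prems that by simp
  have IH_b: "sat W R V u b \<longleftrightarrow> sat ?S R V u b" if "u \<in> ?S" for u
    using Imp.IH(2) Imp.prems that by simp
  show ?case
  proof
    assume W_sat: "sat W R V w (Imp a b)"
    show "sat ?S R V w (Imp a b)"
    proof (simp only: sat.simps, intro ballI impI)
      fix v assume "v \<in> ?S" "R w v" "sat ?S R V v a"
      then have "v \<in> W" "sat W R V v a" using IH_a sep_pointsD by auto
      then have "sat W R V v b" using W_sat \<open>R w v\<close> by simp
      then show "sat ?S R V v b" using IH_b \<open>v \<in> ?S\<close> by simp
    qed
  next
    assume S_sat: "sat ?S R V w (Imp a b)"
    show "sat W R V w (Imp a b)"
    proof (rule ccontr)
      assume "\<not> sat W R V w (Imp a b)"
      then obtain v where v: "v \<in> W" "R w v" "sat W R V v a" "\<not> sat W R V v b" by auto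
      then obtain u where u: "u \<in> ?S" "R v u" "\<not> sat W R V u b"
        using has_borders_refuted_at_sep_point[OF m hb, of b v] Imp.prems(1,2) by auto
      have uW: "u \<in> W" and wW: "w \<in> W" using u(1) Imp.prems(3) by (auto dest: sep_pointsD)
      have "sat W R V u a" using sat_persistent[OF m _ v(1) uW u(2) v(3)] Imp.prems by simp
      moreover have "R w u" using is_model_trans[OF m wW v(1) uW v(2) u(2)] .
      ultimately have "sat ?S R V u b" using S_sat u(1) IH_a by simp
      then show False using u IH_b by simp
    qed
  qed
qed auto

lemma p_morphism_image_subset: "p_morphism n S R V W' R' V' f \<Longrightarrow> x \<in> S \<Longrightarrow> f x \<in> W'"
  unfolding p_morphism_def by blast

lemma p_morphism_mono:
  "p_morphism n S R V W' R' V' f \<Longrightarrow> x \<in> S \<Longrightarrow> y \<in> S \<Longrightarrow> R x y \<Longrightarrow> R' (f x) (f y)"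
  unfolding p_morphism_def by blast

lemma p_morphism_colour: "p_morphism n S R V W' R' V' f \<Longrightarrow> x \<in> S \<Longrightarrow> i < n \<Longrightarrow> V' (f x) i = V x i"
  unfolding p_morphism_def by blast

lemma p_morphism_back:
  "p_morphism n S R V W' R' V' f \<Longrightarrow> x \<in> S \<Longrightarrow> y \<in> W' \<Longrightarrow> R' (f x) y \<Longrightarrow>
    \<exists>x'\<in>S. R x x' \<and> f x' = y"
  unfolding p_morphism_def by blast

lemma p_morphism_sat_image_iff:
  assumes f: "p_morphism n S R V W' R' V' f"
    and "vars \<phi> \<subseteq> {..<n}" and "x \<in> S"
  shows "sat S R V x \<phi> \<longleftrightarrow> sat (f ` S) R' V' (f x) \<phi>"
  using assms(2-)
proof (induction \<phi> arbitrary: x)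
  case (Var i)
  then show ?case using p_morphism_colour[OF f] by simp
next
  case (Imp a b)
  have IH_a: "sat S R V u a \<longleftrightarrow> sat (f ` S) R' V' (f u) a" if "u \<in> S" for u
    using Imp.IH(1) Imp.prems that by simp
  have IH_b: "sat S R V u b \<longleftrightarrow> sat (f ` S) R' V' (f u) b" if "u \<in> S" for u
    using Imp.IH(2) Imp.prems that by simp
  show ?case
  proof
    assume S_sat: "sat S R V x (Imp a b)"
    show "sat (f ` S) R' V' (f x) (Imp a b)"
    proof (simp only: sat.simps, intro ballI impI)
      fix y assume y: "y \<in> f ` S" "R' (f x) y" "sat (f ` S) R' V' y a"
      then obtain x' where x': "x' \<in> S" "R x x'" "f x' = y"
        using p_morphism_back[OF f Imp.prems(2)] p_morphism_image_subset[OF f] by blast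
      then have "sat S R V x' a" using y(3) IH_a by simp
      then have "sat S R V x' b" using S_sat x'(1,2) by simp
      then show "sat (f ` S) R' V' y b" using x' IH_b by simp
    qed
  next
    assume image_sat: "sat (f ` S) R' V' (f x) (Imp a b)"
    show "sat S R V x (Imp a b)"
    proof (simp only: sat.simps, intro ballI impI)
      fix v assume v: "v \<in> S" "R x v" "sat S R V v a"
      have "R' (f x) (f v)" using p_morphism_mono[OF f Imp.prems(2) v(1,2)] .
      moreover have "sat (f ` S) R' V' (f v) a" using v(1,3) IH_a by simp
      ultimately have "sat (f ` S) R' V' (f v) b" using image_sat v(1) by simp
      then show "sat S R V v b" using v(1) IH_b by simp
    qed
  qed
qed auto

theorem proposition3p12:
  fixes n :: nat and W :: "'a set" and R :: "'a \<Rightarrow> 'a \<Rightarrow> bool" and V :: "'a \<Rightarrow> nat \<Rightarrow> bool"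
    and f :: "'a \<Rightarrow> form set" and w :: 'a and \<phi> :: form
  assumes "n \<ge> 1"
    and "is_model n W R V"
    and "has_borders n W R V"
    and "p_morphism n (sep_points n W R V) R V (U_W n) U_R U_V f"
    and "w \<in> sep_points n W R V"
    and "and_imp_form \<phi>"
    and "vars \<phi> \<subseteq> {..<n}"
  shows "sat W R V w \<phi> \<longleftrightarrow> sat (f ` sep_points n W R V) U_R U_V (f w) \<phi>"
proof -
  have "sat W R V w \<phi> \<longleftrightarrow> sat (sep_points n W R V) R V w \<phi>"
    using sat_sep_points_iff[OF assms(2,3,6,7,5)] .
  also have "\<dots> \<longleftrightarrow> sat (f ` sep_points n W R V) U_R U_V (f w) \<phi>"
    using p_morphism_sat_image_iff[OF assms(4,7,5)] .
  finally show ?thesis .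
qed

end
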